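(* For fixed positive integers $x$ and $y$, the expected maximum in-degree of the task-dependency graph generated by the $(x,y)$ edge-addition process on $n$ vertices is $\Theta(n)$, and the expected maximum out-degree of this graph is also $\Theta(n)$, as $n\to\infty$.
   Context: A task-dependency graph is a finite directed acyclic graph (no loops, no multiple edges). A vertex is initial if it has in-degree $0$ and terminal if it has out-degree $0$ (an isolated vertex is both). An $(x,y)$ task-dependency graph has exactly $x$ initial and exactly $y$ terminal vertices. The $(x,y)$ edge-addition process on $n$ vertices: start with the empty graph on $\{1,\dots,n\}$ and repeatedly add, uniformly at random, an edge $(a,b)$ with $a<b$ not yet present; if an addition would cause fewer than $x$ initial vertices or fewer than $y$ terminal vertices, it is cancelled. The process halts if the graph after some edge addition is an $(x,y)$ task-dependency graph, or if no more edges can be added; the result is the final graph. *)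

theory Defs
  imports "HOL-Probability.Probability" "HOL-Library.Landau_Symbols"
begin

text \<open>A graph on vertex set {1..n} is a set of edges (a,b) with a < b (hence acyclic).\<close>

definition initial_vertices :: "nat \<Rightarrow> (nat \<times> nat) set \<Rightarrow> nat set" where
  "initial_vertices n G = {v \<in> {1..n}. \<forall>a. (a, v) \<notin> G}"

definition terminal_vertices :: "nat \<Rightarrow> (nat \<times> nat) set \<Rightarrow> nat set" where
  "terminal_vertices n G = {v \<in> {1..n}. \<forall>b. (v, b) \<notin> G}"

definition is_xy_tdg :: "nat \<Rightarrow> nat \<Rightarrow> nat \<Rightarrow> (nat \<times> nat) set \<Rightarrow> bool" where
  "is_xy_tdg x y n G \<longleftrightarrow>
     card (initial_vertices n G) = x \<and> card (terminal_vertices n G) = y"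

definition addable_edges :: "nat \<Rightarrow> nat \<Rightarrow> nat \<Rightarrow> (nat \<times> nat) set \<Rightarrow> (nat \<times> nat) set" where
  "addable_edges x y n G = {(a, b). 1 \<le> a \<and> a < b \<and> b \<le> n \<and> (a, b) \<notin> G \<and>
      card (initial_vertices n (insert (a, b) G)) \<ge> x \<and>
      card (terminal_vertices n (insert (a, b) G)) \<ge> y}"

definition halted :: "nat \<Rightarrow> nat \<Rightarrow> nat \<Rightarrow> (nat \<times> nat) set \<Rightarrow> bool" where
  "halted x y n G \<longleftrightarrow> is_xy_tdg x y n G \<or> addable_edges x y n G = {}"

text \<open>Run the process for at most k successful edge additions. Cancelled attempts leave the
  graph unchanged, so the next successful addition is uniform over the addable edges.\<close>
fun run_process :: "nat \<Rightarrow> nat \<Rightarrow> nat \<Rightarrow> nat \<Rightarrow> (nat \<times> nat) set \<Rightarrow> (nat \<times> nat) set pmf" where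
  "run_process x y n 0 G = return_pmf G"
| "run_process x y n (Suc k) G =
     (if halted x y n G then return_pmf G
      else pmf_of_set (addable_edges x y n G) \<bind> (\<lambda>e. run_process x y n k (insert e G)))"

text \<open>Final graph: at most n choose 2 edges can ever be added, so this fuel suffices.\<close>
definition final_graph :: "nat \<Rightarrow> nat \<Rightarrow> nat \<Rightarrow> (nat \<times> nat) set pmf" where
  "final_graph x y n = run_process x y n (n choose 2) {}"

definition in_degree :: "(nat \<times> nat) set \<Rightarrow> nat \<Rightarrow> nat" where
  "in_degree G v = card {a. (a, v) \<in> G}"

definition out_degree :: "(nat \<times> nat) set \<Rightarrow> nat \<Rightarrow> nat" where
  "out_degree G v = card {b. (v, b) \<in> G}"

definition max_in_degree :: "nat \<Rightarrow> (nat \<times> nat) set \<Rightarrow> nat" where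
  "max_in_degree n G = Max (in_degree G ` {1..n})"

definition max_out_degree :: "nat \<Rightarrow> (nat \<times> nat) set \<Rightarrow> nat" where
  "max_out_degree n G = Max (out_degree G ` {1..n})"

end

(*
  Call an edge a trap edge if both of its endpoints lie in {1..x+1} or both lie in {n-y..n};
  there are only O(1) of them. As long as the graph contains no trap edge, the vertices 1..x+1
  are initial and n-y..n are terminal, so no addition is cancelled and the process cannot halt:
  it is plain uniform random edge addition. While fewer than m of the N = n(n-1)/2 possible
  edges are present, each step hits one of the t trap edges with probability at most t/(N-m),
  so by a union bound the final graph has more than m = N/(4t) edges with probability at least
  2/3. Such a graph has maximum in- and out-degree at least n/(16t), whereas every degree is at
  most n.
*)
theory Submission
  imports Defs
begin

lemma prob_bind_pmf:
  "measure_pmf.prob (bind_pmf p f) A = (\<integral>x. measure_pmf.prob (f x) A \<partial>p)"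
  unfolding measure_pmf_bind
  by (rule measure_pmf.measure_bind[where N="count_space UNIV"])
    (auto intro: measurable_pmf_measure1 simp: measure_pmf_in_subprob_algebra)

lemma expectation_pmf_of_set_le_indicator_plus:
  fixes P :: "'a \<Rightarrow> real"
  assumes "finite A" "finite T" "0 < d" "d \<le> card A"
    and P: "\<And>e. e \<in> A \<Longrightarrow> P e \<le> indicator T e + c"
  shows "measure_pmf.expectation (pmf_of_set A) P \<le> card T / d + c"
proof -
  have "A \<noteq> {}"
    using assms(3,4) by auto
  have "(\<Sum>e\<in>A. P e) \<le> (\<Sum>e\<in>A. indicator T e + c)"
    by (rule sum_mono) (rule P)
  also have "\<dots> = card (A \<inter> T) + card A * c"
    using assms(1) by (simp add: sum.distrib indicator_def sum.If_cases Int_def)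
  finally have "measure_pmf.expectation (pmf_of_set A) P \<le> card (A \<inter> T) / card A + c"
    using assms(1) \<open>A \<noteq> {}\<close> by (simp add: integral_pmf_of_set card_gt_0_iff divide_simps mult.commute)
  also have "card (A \<inter> T) / card A \<le> card T / d"
    using assms(2-4) by (intro frac_le) (auto intro: card_mono)
  finally show ?thesis
    by simp
qed

lemma mult_prob_le_expectation_pmf:
  fixes f :: "'a \<Rightarrow> real"
  assumes "finite (set_pmf p)" "\<And>z. z \<in> set_pmf p \<Longrightarrow> 0 \<le> f z"
    and "\<And>z. z \<in> set_pmf p \<Longrightarrow> z \<in> A \<Longrightarrow> c \<le> f z"
  shows "c * measure_pmf.prob p A \<le> measure_pmf.expectation p f"
proof -
  have "c * measure_pmf.prob p A = measure_pmf.expectation p (\<lambda>z. c * indicator A z)"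
    by simp
  also have "\<dots> \<le> measure_pmf.expectation p f"
    using assms by (intro integral_mono_AE integrable_measure_pmf_finite AE_pmfI)
      (auto simp: indicator_def)
  finally show ?thesis .
qed

lemma card_le_mult_max_out_degree:
  assumes "F \<subseteq> {1..n} \<times> {1..n}"
  shows "card F \<le> n * max_out_degree n F"
proof -
  have "F = (SIGMA v:{1..n}. {b. (v, b) \<in> F})"
    using assms by auto
  moreover have "finite {b. (v, b) \<in> F}" for v
    by (rule finite_subset[of _ "{1..n}"]) (use assms in auto)
  ultimately have "card F = (\<Sum>v\<in>{1..n}. card {b. (v, b) \<in> F})"
    by (metis card_SigmaI finite_atLeastAtMost)
  also have "\<dots> = (\<Sum>v\<in>{1..n}. out_degree F v)"
    by (simp add: out_degree_def)
  also have "\<dots> \<le> (\<Sum>v\<in>{1..n}. max_out_degree n F)"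
    by (rule sum_mono) (simp add: max_out_degree_def)
  finally show ?thesis
    by simp
qed

lemma max_out_degree_le:
  assumes "F \<subseteq> {1..n} \<times> {1..n}" "1 \<le> n"
  shows "max_out_degree n F \<le> n"
  unfolding max_out_degree_def
proof (rule Max.boundedI)
  fix d assume "d \<in> out_degree F ` {1..n}"
  then obtain v where "d = card {b. (v, b) \<in> F}"
    by (auto simp: out_degree_def)
  moreover have "{b. (v, b) \<in> F} \<subseteq> {1..n}"
    using assms(1) by auto
  ultimately show "d \<le> n"
    by (metis card_atLeastAtMost card_mono diff_Suc_1 finite_atLeastAtMost)
qed (use assms(2) in auto)

lemma max_in_degree_eq_max_out_degree_converse:
  "max_in_degree n F = max_out_degree n (F\<inverse>)"
  by (simp add: max_in_degree_def max_out_degree_def in_degree_def out_degree_def)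

lemma card_le_mult_max_in_degree:
  assumes "F \<subseteq> {1..n} \<times> {1..n}"
  shows "card F \<le> n * max_in_degree n F"
  using card_le_mult_max_out_degree[of "F\<inverse>" n] assms
  by (auto simp: max_in_degree_eq_max_out_degree_converse)

lemma max_in_degree_le:
  assumes "F \<subseteq> {1..n} \<times> {1..n}" "1 \<le> n"
  shows "max_in_degree n F \<le> n"
  using max_out_degree_le[of "F\<inverse>" n] assms
  by (auto simp: max_in_degree_eq_max_out_degree_converse)

definition all_edges :: "nat \<Rightarrow> (nat \<times> nat) set" where
  "all_edges n = {(a, b). 1 \<le> a \<and> a < b \<and> b \<le> n}"

lemma all_edges_subset: "all_edges n \<subseteq> {1..n} \<times> {1..n}"
  by (auto simp: all_edges_def)

lemma finite_all_edges: "finite (all_edges n)"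
  using all_edges_subset by (rule finite_subset) simp

lemma card_all_edges: "card (all_edges n) = n choose 2"
proof (induction n)
  case 0
  have "all_edges 0 = {}"
    by (auto simp: all_edges_def)
  then show ?case
    by simp
next
  case (Suc n)
  have "all_edges (Suc n) = all_edges n \<union> (\<lambda>a. (a, Suc n)) ` {1..n}"
    by (auto simp: all_edges_def)
  moreover have "all_edges n \<inter> (\<lambda>a. (a, Suc n)) ` {1..n} = {}"
    by (auto simp: all_edges_def)
  moreover have "card ((\<lambda>a. (a, Suc n)) ` {1..n}) = n"
    by (simp add: card_image inj_on_def)
  ultimately have "card (all_edges (Suc n)) = card (all_edges n) + n"
    by (simp add: card_Un_disjoint finite_all_edges)
  then show ?case
    using Suc by (simp add: numeral_2_eq_2)
qed

lemma two_mult_card_all_edges: "2 * card (all_edges n) = n * (n - 1)"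
proof -
  have "even (n * (n - 1))"
    by (cases "even n") auto
  then show ?thesis
    by (simp add: card_all_edges choose_two)
qed

definition trap_edges :: "nat \<Rightarrow> nat \<Rightarrow> nat \<Rightarrow> (nat \<times> nat) set" where
  "trap_edges x y n =
     {(a, b). 1 \<le> a \<and> a < b \<and> b \<le> x + 1} \<union> {(a, b). n - y \<le> a \<and> a < b \<and> b \<le> n}"

lemma trap_edges_subset:
  "trap_edges x y n \<subseteq> {1..x+1} \<times> {1..x+1} \<union> {n-y..n} \<times> {n-y..n}"
  by (auto simp: trap_edges_def)

lemma finite_trap_edges: "finite (trap_edges x y n)"
  using trap_edges_subset by (rule finite_subset) simp

lemma card_trap_edges_le: "card (trap_edges x y n) \<le> (x + 1)\<^sup>2 + (y + 1)\<^sup>2"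
proof -
  have "card (trap_edges x y n) \<le> card ({1..x+1} \<times> {1..x+1} \<union> {n-y..n} \<times> {n-y..n})"
    by (rule card_mono[OF _ trap_edges_subset]) simp
  also have "\<dots> \<le> card ({1..x+1} \<times> {1..x+1}) + card ({n-y..n} \<times> {n-y..n})"
    by (rule card_Un_le)
  also have "\<dots> \<le> (x + 1)\<^sup>2 + (y + 1)\<^sup>2"
  proof -
    have "card {n-y..n} \<le> y + 1"
      by simp
    from mult_le_mono[OF this this] show ?thesis
      by (simp add: card_cartesian_product power2_eq_square)
  qed
  finally show ?thesis .
qed

lemma one_two_mem_trap_edges: "1 \<le> x \<Longrightarrow> (1, 2) \<in> trap_edges x y n"
  by (simp add: trap_edges_def)

lemma card_trap_edges_pos: "1 \<le> x \<Longrightarrow> 0 < card (trap_edges x y n)"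
  using one_two_mem_trap_edges finite_trap_edges card_gt_0_iff by blast

definition trap_free :: "nat \<Rightarrow> nat \<Rightarrow> nat \<Rightarrow> (nat \<times> nat) set \<Rightarrow> bool" where
  "trap_free x y n G \<longleftrightarrow> G \<subseteq> all_edges n \<and> G \<inter> trap_edges x y n = {}"

lemma finite_trap_free: "trap_free x y n G \<Longrightarrow> finite G"
  using finite_subset[OF _ finite_all_edges] by (auto simp: trap_free_def)

lemma one_two_mem_all_edges_Diff_trap_free:
  assumes "trap_free x y n G" "1 \<le> x" "2 \<le> n"
  shows "(1, 2) \<in> all_edges n - G"
  using assms one_two_mem_trap_edges[of x y n] by (auto simp: trap_free_def all_edges_def)

lemma card_lt_card_all_edges_trap_free:
  assumes "trap_free x y n G" "1 \<le> x" "2 \<le> n"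
  shows "card G < card (all_edges n)"
  using assms one_two_mem_all_edges_Diff_trap_free[OF assms]
  by (intro psubset_card_mono finite_all_edges) (auto simp: trap_free_def)

lemma card_initial_vertices_trap_free:
  assumes "trap_free x y n G" "x + 1 \<le> n"
  shows "x + 1 \<le> card (initial_vertices n G)"
proof -
  have "{1..x+1} \<subseteq> initial_vertices n G"
    using assms by (fastforce simp: initial_vertices_def trap_free_def all_edges_def trap_edges_def)
  from card_mono[OF _ this] show ?thesis
    by (simp add: initial_vertices_def)
qed

lemma card_terminal_vertices_trap_free:
  assumes "trap_free x y n G" "y + 1 \<le> n"
  shows "y + 1 \<le> card (terminal_vertices n G)"
proof -
  have "{n-y..n} \<subseteq> terminal_vertices n G"
    using assms by (fastforce simp: terminal_vertices_def trap_free_def all_edges_def trap_edges_def)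
  from card_mono[OF _ this] show ?thesis
    using assms(2) by (simp add: terminal_vertices_def)
qed

lemma card_initial_vertices_insert:
  "card (initial_vertices n G) - 1 \<le> card (initial_vertices n (insert (a, b) G))"
proof -
  have "initial_vertices n G - {b} \<subseteq> initial_vertices n (insert (a, b) G)"
    by (auto simp: initial_vertices_def)
  then have "card (initial_vertices n G - {b}) \<le> card (initial_vertices n (insert (a, b) G))"
    by (rule card_mono[rotated]) (simp add: initial_vertices_def)
  then show ?thesis
    using diff_card_le_card_Diff[of "{b}" "initial_vertices n G"] by simp
qed

lemma card_terminal_vertices_insert:
  "card (terminal_vertices n G) - 1 \<le> card (terminal_vertices n (insert (a, b) G))"
proof -
  have "terminal_vertices n G - {a} \<subseteq> terminal_vertices n (insert (a, b) G)"
    by (auto simp: terminal_vertices_def)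
  then have "card (terminal_vertices n G - {a}) \<le> card (terminal_vertices n (insert (a, b) G))"
    by (rule card_mono[rotated]) (simp add: terminal_vertices_def)
  then show ?thesis
    using diff_card_le_card_Diff[of "{a}" "terminal_vertices n G"] by simp
qed

lemma addable_edges_trap_free:
  assumes "trap_free x y n G" "x + 1 \<le> n" "y + 1 \<le> n"
  shows "addable_edges x y n G = all_edges n - G"
proof -
  have "x \<le> card (initial_vertices n (insert (a, b) G))" for a b
    using card_initial_vertices_insert[of n G a b] card_initial_vertices_trap_free[OF assms(1,2)]
    by linarith
  moreover have "y \<le> card (terminal_vertices n (insert (a, b) G))" for a b
    using card_terminal_vertices_insert[of n G a b] card_terminal_vertices_trap_free[OF assms(1,3)]
    by linarith
  ultimately show ?thesis
    by (auto simp: addable_edges_def all_edges_def)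
qed

lemma not_halted_trap_free:
  assumes "trap_free x y n G" "1 \<le> x" "x + 1 \<le> n" "y + 1 \<le> n"
  shows "\<not> halted x y n G"
proof -
  have "\<not> is_xy_tdg x y n G"
    using card_initial_vertices_trap_free[OF assms(1,3)] by (simp add: is_xy_tdg_def)
  moreover have "(1, 2) \<in> all_edges n - G"
    using assms by (intro one_two_mem_all_edges_Diff_trap_free) auto
  ultimately show ?thesis
    using addable_edges_trap_free[OF assms(1,3,4)] by (auto simp: halted_def)
qed

lemma run_process_Suc_trap_free:
  assumes "trap_free x y n G" "1 \<le> x" "x + 1 \<le> n" "y + 1 \<le> n"
  shows "run_process x y n (Suc k) G =
           pmf_of_set (all_edges n - G) \<bind> (\<lambda>e. run_process x y n k (insert e G))"
  using not_halted_trap_free[OF assms] addable_edges_trap_free[OF assms(1,3,4)] by simp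

lemma set_pmf_run_process:
  "F \<in> set_pmf (run_process x y n k G) \<Longrightarrow> G \<subseteq> F \<and> F \<subseteq> G \<union> all_edges n"
proof (induction k arbitrary: G)
  case 0
  then show ?case
    by simp
next
  case (Suc k)
  show ?case
  proof (cases "halted x y n G")
    case True
    then show ?thesis
      using Suc.prems by simp
  next
    case False
    have "addable_edges x y n G \<subseteq> all_edges n"
      by (auto simp: addable_edges_def all_edges_def)
    moreover from False have "addable_edges x y n G \<noteq> {}"
      by (simp add: halted_def)
    ultimately obtain e where "e \<in> all_edges n" "F \<in> set_pmf (run_process x y n k (insert e G))"
      using Suc.prems False finite_subset[OF _ finite_all_edges] by auto
    then show ?thesis
      using Suc.IH by blast
  qed
qed

lemma prob_run_process_Suc_card_le_eq_0:
  assumes "trap_free x y n G" "1 \<le> x" "x + 1 \<le> n" "y + 1 \<le> n" "m \<le> card G"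
  shows "measure_pmf.prob (run_process x y n (Suc k) G) {F. card F \<le> m} = 0"
proof -
  have finite_G: "finite G"
    using assms(1) by (rule finite_trap_free)
  have "m < card F" if F: "F \<in> set_pmf (run_process x y n (Suc k) G)" for F
  proof -
    have "2 \<le> n"
      using assms(2,3) by simp
    then have "all_edges n - G \<noteq> {}"
      using one_two_mem_all_edges_Diff_trap_free[OF assms(1,2)] by blast
    then obtain e where e: "e \<in> all_edges n - G"
      and "F \<in> set_pmf (run_process x y n k (insert e G))"
      using F unfolding run_process_Suc_trap_free[OF assms(1-4)] by (auto simp: finite_all_edges)
    then have "insert e G \<subseteq> F" "F \<subseteq> insert e G \<union> all_edges n"
      using set_pmf_run_process by blast+
    then have "card (insert e G) \<le> card F"
      by (intro card_mono) (auto intro: finite_subset simp: finite_G finite_all_edges)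
    then show ?thesis
      using e finite_G assms(5) by simp
  qed
  then show ?thesis
    by (fastforce simp: measure_pmf_zero_iff)
qed

lemma prob_run_process_few_edges:
  assumes x: "1 \<le> x" "x + 1 \<le> n" "y + 1 \<le> n" and m: "m < card (all_edges n)"
    and G: "trap_free x y n G" and fuel: "card (all_edges n) \<le> card G + k"
  shows "measure_pmf.prob (run_process x y n k G) {F. card F \<le> m}
           \<le> real (m - card G) * (real (card (trap_edges x y n)) / real (card (all_edges n) - m))"
  using G fuel
proof (induction k arbitrary: G)
  case 0
  then show ?case
    using card_lt_card_all_edges_trap_free[of x y n G] x by simp
next
  case (Suc k)
  let ?N = "card (all_edges n)" and ?T = "trap_edges x y n" and ?A = "all_edges n - G"
  let ?q = "real (card ?T) / real (?N - m)"
  show ?case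
  proof (cases "card G < m")
    case False
    then show ?thesis
      using prob_run_process_Suc_card_le_eq_0[OF Suc.prems(1) x] by simp
  next
    case True
    define P where "P e = measure_pmf.prob (run_process x y n k (insert e G)) {F. card F \<le> m}" for e
    have finite_G: "finite G"
      using Suc.prems(1) by (rule finite_trap_free)
    have finite_A: "finite ?A"
      by (simp add: finite_all_edges)
    have card_A: "card ?A = ?N - card G"
      using Suc.prems(1) finite_G by (simp add: card_Diff_subset trap_free_def)
    have prob_eq: "measure_pmf.prob (run_process x y n (Suc k) G) {F. card F \<le> m}
                     = measure_pmf.expectation (pmf_of_set ?A) P"
      unfolding run_process_Suc_trap_free[OF Suc.prems(1) x] prob_bind_pmf P_def ..
    have "P e \<le> indicator ?T e + real (m - (card G + 1)) * ?q" if e: "e \<in> ?A" for e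
    proof (cases "e \<in> ?T")
      case True
      have "P e \<le> 1"
        by (simp add: P_def)
      then show ?thesis
        using True by (simp add: add_increasing2)
    next
      case False
      have "trap_free x y n (insert e G)"
        using e False Suc.prems(1) by (auto simp: trap_free_def)
      moreover have "?N \<le> card (insert e G) + k"
        using e finite_G Suc.prems(2) by simp
      ultimately have "P e \<le> real (m - card (insert e G)) * ?q"
        unfolding P_def by (rule Suc.IH)
      then show ?thesis
        using e False finite_G by simp
    qed
    then have "measure_pmf.expectation (pmf_of_set ?A) P \<le> ?q + real (m - (card G + 1)) * ?q"
      using card_A True m
      by (intro expectation_pmf_of_set_le_indicator_plus finite_A finite_trap_edges) auto
    also have "\<dots> = real (m - card G) * ?q"
    proof -
      have "real (m - card G) = 1 + real (m - (card G + 1))"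
        using True by simp
      then show ?thesis
        by (simp only: distrib_right mult_1)
    qed
    finally show ?thesis
      unfolding prob_eq .
  qed
qed

lemma set_pmf_final_graph: "F \<in> set_pmf (final_graph x y n) \<Longrightarrow> F \<subseteq> all_edges n"
  using set_pmf_run_process unfolding final_graph_def by blast

lemma finite_set_pmf_final_graph: "finite (set_pmf (final_graph x y n))"
  by (rule finite_subset[of _ "Pow (all_edges n)"])
    (auto dest: set_pmf_final_graph simp: finite_all_edges)

lemma prob_final_graph_few_edges:
  assumes x: "1 \<le> x" "x + 1 \<le> n" "y + 1 \<le> n"
  shows "measure_pmf.prob (final_graph x y n)
           {F. card F \<le> card (all_edges n) div (4 * card (trap_edges x y n))} \<le> 1/3"
proof -
  define N where "N = card (all_edges n)"
  define t where "t = card (trap_edges x y n)"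
  define m where "m = N div (4 * t)"
  have t: "0 < t"
    unfolding t_def using x(1) by (rule card_trap_edges_pos)
  have m_le: "m * (4 * t) \<le> N"
    unfolding m_def by (rule div_times_less_eq_dividend)
  have "2 \<le> n * (n - 1)"
    using mult_le_mono[of 2 n 1 "n - 1"] x by simp
  moreover have "m * 4 \<le> m * (4 * t)"
    using t by simp
  ultimately have "m < N"
    using m_le two_mult_card_all_edges[of n] unfolding N_def by linarith
  have "measure_pmf.prob (final_graph x y n) {F. card F \<le> m} \<le> real m * (t / real (N - m))"
    using prob_run_process_few_edges[OF x \<open>m < N\<close>[unfolded N_def], of "{}" "n choose 2"]
    by (simp add: final_graph_def t_def N_def card_all_edges trap_free_def)
  also have "\<dots> \<le> 1/3"
  proof -
    have "m \<le> m * t" "m * (4 * t) = 3 * (m * t) + m * t"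
      using t by simp_all
    then have "3 * (m * t) \<le> N - m"
      using m_le by linarith
    then have "3 * (real m * t) \<le> real (N - m)"
      by (metis of_nat_le_iff of_nat_mult of_nat_numeral)
    then show ?thesis
      using \<open>m < N\<close> by (simp add: divide_simps)
  qed
  finally show ?thesis
    unfolding m_def N_def t_def .
qed

lemma prob_final_graph_dense:
  assumes x: "1 \<le> x" "x + 1 \<le> n" "y + 1 \<le> n"
  shows "2/3 \<le> measure_pmf.prob (final_graph x y n)
                  {F. n * n \<le> 16 * card (trap_edges x y n) * card F}"
proof -
  let ?p = "final_graph x y n"
  let ?N = "card (all_edges n)" and ?t = "card (trap_edges x y n)"
  let ?m = "?N div (4 * ?t)"
  have "UNIV - {F. card F \<le> ?m} \<subseteq> {F. n * n \<le> 16 * ?t * card F}"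
  proof safe
    fix F assume "\<not> card F \<le> ?m"
    have "?N mod (4 * ?t) < 4 * ?t"
      using card_trap_edges_pos[OF x(1)] by simp
    then have "?N < ?m * (4 * ?t) + 4 * ?t"
      using div_mult_mod_eq[of ?N "4 * ?t"] by linarith
    then have "2 * (n * (n - 1)) < 16 * ?t * (?m + 1)"
      using two_mult_card_all_edges[of n] by (simp add: algebra_simps)
    moreover have "n * n \<le> 2 * (n * (n - 1))"
      using x by (cases n) (auto simp: algebra_simps)
    moreover have "16 * ?t * (?m + 1) \<le> 16 * ?t * card F"
      using \<open>\<not> card F \<le> ?m\<close> by (intro mult_le_mono2) simp
    ultimately show "n * n \<le> 16 * ?t * card F"
      by linarith
  qed
  then have "measure_pmf.prob ?p (UNIV - {F. card F \<le> ?m})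
               \<le> measure_pmf.prob ?p {F. n * n \<le> 16 * ?t * card F}"
    by (rule measure_pmf.finite_measure_mono) simp
  moreover have "measure_pmf.prob ?p (UNIV - {F. card F \<le> ?m}) = 1 - measure_pmf.prob ?p {F. card F \<le> ?m}"
    using measure_pmf.prob_compl[of "{F. card F \<le> ?m}" ?p] by simp
  ultimately show ?thesis
    using prob_final_graph_few_edges[OF x] by linarith
qed

lemma expectation_final_graph_bounds:
  fixes D :: "(nat \<times> nat) set \<Rightarrow> nat"
  assumes x: "1 \<le> x" "x + 1 \<le> n" "y + 1 \<le> n"
    and D: "\<And>F. F \<subseteq> {1..n} \<times> {1..n} \<Longrightarrow> D F \<le> n \<and> card F \<le> n * D F"
  shows "real n / (24 * real (card (trap_edges x y n)))
           \<le> measure_pmf.expectation (final_graph x y n) (\<lambda>F. real (D F))"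
    and "measure_pmf.expectation (final_graph x y n) (\<lambda>F. real (D F)) \<le> real n"
proof -
  let ?p = "final_graph x y n"
  define t where "t = card (trap_edges x y n)"
  have t: "0 < t"
    unfolding t_def using x(1) by (rule card_trap_edges_pos)
  have D_final: "D F \<le> n \<and> card F \<le> n * D F" if "F \<in> set_pmf ?p" for F
    using D set_pmf_final_graph[OF that] all_edges_subset by blast
  have "real n / (16 * real t) \<le> real (D F)"
    if "F \<in> set_pmf ?p" "F \<in> {F. n * n \<le> 16 * t * card F}" for F
  proof -
    have "n * n \<le> 16 * t * card F"
      using that(2) by simp
    also have "\<dots> \<le> n * (16 * t * D F)"
      using D_final[OF that(1)] by simp
    finally have "n \<le> 16 * t * D F"
      using x by simp
    then have "real n \<le> 16 * real t * real (D F)"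
      by (metis of_nat_le_iff of_nat_mult of_nat_numeral)
    then show ?thesis
      using t by (simp add: divide_simps mult_ac)
  qed
  note D_ge = this
  have "real n / (24 * real t) = real n / (16 * real t) * (2/3)"
    by simp
  also have "\<dots> \<le> real n / (16 * real t) * measure_pmf.prob ?p {F. n * n \<le> 16 * t * card F}"
    using prob_final_graph_dense[OF x] unfolding t_def by (intro mult_left_mono) auto
  also have "\<dots> \<le> measure_pmf.expectation ?p (\<lambda>F. real (D F))"
    using D_ge by (intro mult_prob_le_expectation_pmf finite_set_pmf_final_graph) auto
  finally show "real n / (24 * real (card (trap_edges x y n)))
                  \<le> measure_pmf.expectation ?p (\<lambda>F. real (D F))"
    by (simp only: t_def)
  show "measure_pmf.expectation ?p (\<lambda>F. real (D F)) \<le> real n"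
    using D_final
    by (intro measure_pmf.integral_le_const integrable_measure_pmf_finite finite_set_pmf_final_graph
        AE_pmfI) auto
qed

lemma expectation_final_graph_bigtheta:
  fixes D :: "nat \<Rightarrow> (nat \<times> nat) set \<Rightarrow> nat"
  assumes x: "1 \<le> x"
    and D: "\<And>n F. 1 \<le> n \<Longrightarrow> F \<subseteq> {1..n} \<times> {1..n} \<Longrightarrow> D n F \<le> n \<and> card F \<le> n * D n F"
  shows "(\<lambda>n. measure_pmf.expectation (final_graph x y n) (\<lambda>F. real (D n F))) \<in> \<Theta>(\<lambda>n. real n)"
proof -
  define K where "K = (x + 1)\<^sup>2 + (y + 1)\<^sup>2"
  have K: "0 < K"
    by (simp add: K_def)
  have "1 / (24 * K) * real n \<le> measure_pmf.expectation (final_graph x y n) (\<lambda>F. real (D n F))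
          \<and> measure_pmf.expectation (final_graph x y n) (\<lambda>F. real (D n F)) \<le> real n"
    if n: "x + y + 2 \<le> n" for n
  proof -
    have xyn: "x + 1 \<le> n" "y + 1 \<le> n"
      using n by simp_all
    have "0 < card (trap_edges x y n)" "card (trap_edges x y n) \<le> K"
      using card_trap_edges_pos[OF x] card_trap_edges_le unfolding K_def by blast+
    then have "1 / (24 * K) * real n \<le> real n / (24 * real (card (trap_edges x y n)))"
      by (simp add: frac_le)
    with expectation_final_graph_bounds[OF x xyn, of "D n"] D xyn show ?thesis
      by fastforce
  qed
  then show ?thesis
    using K by (intro bigthetaI'[of "1 / (24 * K)" 1] eventually_mono[OF eventually_ge_at_top])
      force+
qed

theorem mainTheorem16:
  fixes x y :: nat
  assumes "x \<ge> 1" and "y \<ge> 1"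
  shows "(\<lambda>n. measure_pmf.expectation (final_graph x y n) (\<lambda>G. real (max_in_degree n G)))
           \<in> \<Theta>(\<lambda>n. real n)
       \<and> (\<lambda>n. measure_pmf.expectation (final_graph x y n) (\<lambda>G. real (max_out_degree n G)))
           \<in> \<Theta>(\<lambda>n. real n)"
  using assms(1)
  by (auto intro!: expectation_final_graph_bigtheta max_in_degree_le card_le_mult_max_in_degree
      max_out_degree_le card_le_mult_max_out_degree)

end
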